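(* Let $\mathbb{D}$ be a division ring with $\operatorname{char}\mathbb{D}\ne 2,3$, let $n\ge 1$, and let $C\in M_n(\mathbb{D})$. Let $\mathbb{D}^n$ denote the space of column vectors $x=(x_1,\dots,x_n)^T$ with entries in $\mathbb{D}$. If for all $a,b\in\mathbb{D}^n$, $a^Tb=0$ implies $a^TCb=0$, then $C=\lambda I$ for some $\lambda\in\mathbb{D}$. *)

theory Defs
  imports "HOL-Analysis.Analysis"
begin

text \<open>Column vectors in D^n are rendered as 'a ^ 'n with a finite index type 'n
  (so n = CARD('n) >= 1); n x n matrices as 'a ^ 'n ^ 'n (row index first).
  Products are written out respecting the order of factors, since D need not
  be commutative.\<close>

definition vdot :: "'a::division_ring ^ 'n ^ 'n \<Rightarrow> 'a ^ 'n \<Rightarrow> 'a ^ 'n \<Rightarrow> 'a" where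
  "vdot C a b = (\<Sum>i\<in>UNIV. \<Sum>j\<in>UNIV. a $ i * C $ i $ j * b $ j)"

definition tdot :: "'a::division_ring ^ 'n \<Rightarrow> 'a ^ 'n \<Rightarrow> 'a" where
  "tdot a b = (\<Sum>i\<in>UNIV. a $ i * b $ i)"

end

theory Submission
  imports Defs
begin

text \<open>Testing the orthogonality hypothesis on the standard basis vectors \<open>e\<^sub>i, e\<^sub>j\<close>
  (\<open>i \<noteq> j\<close>) kills the off-diagonal entries, and testing it on the orthogonal pair
  \<open>e\<^sub>i + e\<^sub>j, e\<^sub>i - e\<^sub>j\<close> gives \<open>C\<^sub>i\<^sub>i - C\<^sub>j\<^sub>j = 0\<close>. Neither step needs the
  hypotheses on the characteristic.\<close>

lemma tdot_add_left: "tdot (a + a') b = tdot a b + tdot a' b"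
  by (simp add: tdot_def distrib_right sum.distrib)

lemma tdot_diff_right: "tdot a (b - b') = tdot a b - tdot a b'"
  by (simp add: tdot_def right_diff_distrib sum_subtractf)

lemma vdot_add_left: "vdot C (a + a') b = vdot C a b + vdot C a' b"
  by (simp add: vdot_def distrib_right sum.distrib)

lemma vdot_diff_right: "vdot C a (b - b') = vdot C a b - vdot C a b'"
  by (simp add: vdot_def right_diff_distrib sum_subtractf)

lemma tdot_axis_axis: "tdot (axis i 1) (axis j 1) = (if i = j then 1 else 0)"
  unfolding tdot_def axis_def by (simp add: if_distrib[of "\<lambda>x. x * _"] cong: if_cong)

lemma vdot_axis_axis: "vdot C (axis i 1) (axis j 1) = C $ i $ j"
  unfolding vdot_def axis_def
  by (simp add: if_distrib[of "\<lambda>x. x * _"] if_distrib[of "\<lambda>x. _ * x"] cong: if_cong)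

lemma mat_if_diagonal_constant:
  fixes C :: "'a::zero ^ 'n ^ 'n"
  assumes "\<And>i j. i \<noteq> j \<Longrightarrow> C $ i $ j = 0" and "\<And>i j. C $ i $ i = C $ j $ j"
  shows "C = mat (C $ k $ k)"
  using assms by (auto simp: vec_eq_iff mat_def)

context
  fixes C :: "'a::division_ring ^ 'n ^ 'n"
  assumes orthogonality_preserved: "\<And>a b. tdot a b = 0 \<Longrightarrow> vdot C a b = 0"
begin

lemma off_diagonal_eq_0:
  assumes "i \<noteq> j"
  shows "C $ i $ j = 0"
  using orthogonality_preserved[of "axis i 1" "axis j 1"] assms
  by (simp add: tdot_axis_axis vdot_axis_axis)

lemma diagonal_eq:
  shows "C $ i $ i = C $ j $ j"
proof (cases "i = j")
  case False
  have "tdot (axis i 1 + axis j 1) (axis i 1 - axis j 1) = 0"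
    using False by (simp add: tdot_add_left tdot_diff_right tdot_axis_axis)
  then have "vdot C (axis i 1 + axis j 1) (axis i 1 - axis j 1) = 0"
    by (rule orthogonality_preserved)
  then show ?thesis
    using False off_diagonal_eq_0[of i j] off_diagonal_eq_0[of j i]
    by (simp add: vdot_add_left vdot_diff_right vdot_axis_axis)
qed simp

end

theorem lemma3p2:
  fixes C :: "'a::division_ring ^ 'n::finite ^ 'n"
  assumes "(2::'a) \<noteq> 0" and "(3::'a) \<noteq> 0"
    and "\<forall>a b :: 'a ^ 'n. tdot a b = 0 \<longrightarrow> vdot C a b = 0"
  shows "\<exists>c::'a. C = mat c"
proof -
  note preserved = assms(3)[rule_format]
  have "C = mat (C $ k $ k)" for k
    using off_diagonal_eq_0[OF preserved] diagonal_eq[OF preserved]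
    by (rule mat_if_diagonal_constant)
  then show ?thesis by blast
qed

end
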